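(* Let $\mathcal{M}=(S,P,E,s_{init},L)$ be a CTMC, let $\varepsilon,\delta,\varepsilon_1,\delta_1,\varepsilon_2,\delta_2\geq 0$, and let $s,s',s''\in S$. (1) The relation $\sim_{\varepsilon,\delta}$ is the largest $(\varepsilon,\delta)$-bisimulation on $\mathcal{M}$, i.e. it is itself an $(\varepsilon,\delta)$-bisimulation and contains every $(\varepsilon,\delta)$-bisimulation on $\mathcal{M}$. (2) If $s\sim_{\varepsilon_1,\delta_1}s'$ and $s'\sim_{\varepsilon_2,\delta_2}s''$, then $s\sim_{\varepsilon_1+\varepsilon_2,\,\delta_1+\delta_2}s''$. (3) $s\sim s'$ if and only if $s\sim_{0,0}s'$.
   Context: A CTMC is a tuple $\mathcal{M}=(S,P,E,s_{init},L)$ with $S$ a finite nonempty set of states, $P\colon S\to\mathrm{Distr}(S)$ a transition probability function (self-loops allowed; write $P(s,s')=P(s)(s')$ and $P(s,A)=\sum_{a\in A}P(s,a)$ for $A\subseteq S$), $E\colon S\to\mathbb{R}_{>0}$ an exit rate function, $s_{init}\in S$ an initial state, and $L\colon S\to 2^{AP}$ a labeling function. For a relation $R\subseteq S\times S$ and $A\subseteq S$ let $R(A)=\{t\in S\mid \exists s\in A: (s,t)\in R\}$. For $\varepsilon,\delta\geq 0$, a reflexive and symmetric relation $R\subseteq S\times S$ is an $(\varepsilon,\delta)$-bisimulation if for all $(s,s')\in R$: (i) $L(s)=L(s')$; (ii) $|\ln E(s)-\ln E(s')|\leq\delta$; (iii) for all $A\subseteq S$, $P(s,A)\leq P(s',R(A))+\varepsilon$.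 States are $(\varepsilon,\delta)$-bisimilar, written $s\sim_{\varepsilon,\delta}s'$, if some $(\varepsilon,\delta)$-bisimulation contains $(s,s')$. A strong bisimulation is an equivalence relation $R$ on $S$ such that for all $(s,s')\in R$: $L(s)=L(s')$, $E(s)=E(s')$, and $P(s,C)=P(s',C)$ for every equivalence class $C$ of $R$; $s\sim s'$ means some strong bisimulation contains $(s,s')$. *)

theory Defs
  imports Complex_Main
begin

definition ctmc :: "('s::finite \<Rightarrow> 's \<Rightarrow> real) \<Rightarrow> ('s \<Rightarrow> real) \<Rightarrow> 's \<Rightarrow> ('s \<Rightarrow> 'ap set) \<Rightarrow> bool" where
  "ctmc P E s_init L \<longleftrightarrow>
     (\<forall>s. (\<forall>t. 0 \<le> P s t) \<and> (\<Sum>t\<in>UNIV. P s t) = 1) \<and> (\<forall>s. 0 < E s)"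

definition Pset :: "('s \<Rightarrow> 's \<Rightarrow> real) \<Rightarrow> 's \<Rightarrow> 's set \<Rightarrow> real" where
  "Pset P s A = (\<Sum>a\<in>A. P s a)"

definition approx_bisim ::
  "('s::finite \<Rightarrow> 's \<Rightarrow> real) \<Rightarrow> ('s \<Rightarrow> real) \<Rightarrow> ('s \<Rightarrow> 'ap set) \<Rightarrow> real \<Rightarrow> real \<Rightarrow> ('s \<times> 's) set \<Rightarrow> bool" where
  "approx_bisim P E L \<epsilon> \<delta> R \<longleftrightarrow> refl R \<and> sym R \<and>
     (\<forall>(s, s') \<in> R. L s = L s' \<and> \<bar>ln (E s) - ln (E s')\<bar> \<le> \<delta> \<and>
        (\<forall>A. Pset P s A \<le> Pset P s' (R `` A) + \<epsilon>))"

definition approx_bisimilar ::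
  "('s::finite \<Rightarrow> 's \<Rightarrow> real) \<Rightarrow> ('s \<Rightarrow> real) \<Rightarrow> ('s \<Rightarrow> 'ap set) \<Rightarrow> real \<Rightarrow> real \<Rightarrow> 's \<Rightarrow> 's \<Rightarrow> bool" where
  "approx_bisimilar P E L \<epsilon> \<delta> s s' \<longleftrightarrow> (\<exists>R. approx_bisim P E L \<epsilon> \<delta> R \<and> (s, s') \<in> R)"

definition approx_bisimilarity ::
  "('s::finite \<Rightarrow> 's \<Rightarrow> real) \<Rightarrow> ('s \<Rightarrow> real) \<Rightarrow> ('s \<Rightarrow> 'ap set) \<Rightarrow> real \<Rightarrow> real \<Rightarrow> ('s \<times> 's) set" where
  "approx_bisimilarity P E L \<epsilon> \<delta> = {(s, s'). approx_bisimilar P E L \<epsilon> \<delta> s s'}"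

definition strong_bisim ::
  "('s::finite \<Rightarrow> 's \<Rightarrow> real) \<Rightarrow> ('s \<Rightarrow> real) \<Rightarrow> ('s \<Rightarrow> 'ap set) \<Rightarrow> ('s \<times> 's) set \<Rightarrow> bool" where
  "strong_bisim P E L R \<longleftrightarrow> equiv UNIV R \<and>
     (\<forall>(s, s') \<in> R. L s = L s' \<and> E s = E s' \<and>
        (\<forall>C \<in> UNIV // R. Pset P s C = Pset P s' C))"

definition strong_bisimilar ::
  "('s::finite \<Rightarrow> 's \<Rightarrow> real) \<Rightarrow> ('s \<Rightarrow> real) \<Rightarrow> ('s \<Rightarrow> 'ap set) \<Rightarrow> 's \<Rightarrow> 's \<Rightarrow> bool" where
  "strong_bisimilar P E L s s' \<longleftrightarrow> (\<exists>R. strong_bisim P E L R \<and> (s, s') \<in> R)"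

end

theory Submission
  imports Defs
begin

text \<open>(\<epsilon>,\<delta>)-bisimulations are closed under nonempty unions and the identity is one,
  so bisimilarity is the union of all of them and hence the largest. Chaining the defining
  inequalities along R1 and then R2 shows that the symmetrised composition
  R1 O R2 \<union> R2 O R1 is an (\<epsilon>1 + \<epsilon>2, \<delta>1 + \<delta>2)-bisimulation, which gives the
  triangle inequality. For an equivalence R, the set R``A is a disjoint union of classes,
  so a strong bisimulation is a (0,0)-bisimulation. Conversely, if R is a
  (0,0)-bisimulation and C is closed under R, the defining inequality applied in both
  directions shows that R-related states give C the same probability; the classes of the
  reflexive transitive closure of R are closed under R, so that closure is a strong
  bisimulation.\<close>

lemma Pset_mono:
  assumes "\<And>t. 0 \<le> P s t" and "A \<subseteq> B"
  shows "Pset P s A \<le> Pset P s (B::'s::finite set)"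
  unfolding Pset_def using assms by (intro sum_mono2) auto

lemma approx_bisimD:
  assumes "approx_bisim P E L \<epsilon> \<delta> R" and "(s, s') \<in> R"
  shows "L s = L s'" and "\<bar>ln (E s) - ln (E s')\<bar> \<le> \<delta>"
    and "Pset P s A \<le> Pset P s' (R `` A) + \<epsilon>"
  using assms unfolding approx_bisim_def by auto

lemma approx_bisimI:
  assumes "refl R" and "sym R"
    and "\<And>s s'. (s, s') \<in> R \<Longrightarrow> L s = L s'"
    and "\<And>s s'. (s, s') \<in> R \<Longrightarrow> \<bar>ln (E s) - ln (E s')\<bar> \<le> \<delta>"
    and "\<And>s s' A. (s, s') \<in> R \<Longrightarrow> Pset P s A \<le> Pset P s' (R `` A) + \<epsilon>"
  shows "approx_bisim P E L \<epsilon> \<delta> R"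
  using assms unfolding approx_bisim_def by auto

lemma approx_bisim_Id:
  assumes "0 \<le> \<epsilon>" and "0 \<le> \<delta>"
  shows "approx_bisim P E L \<epsilon> \<delta> Id"
  using assms by (intro approx_bisimI) (auto simp: refl_on_def sym_def)

lemma approx_bisim_Union:
  assumes nonneg: "\<And>s t. 0 \<le> P s t"
    and "\<RR> \<noteq> {}" and bisims: "\<And>R. R \<in> \<RR> \<Longrightarrow> approx_bisim P E L \<epsilon> \<delta> R"
  shows "approx_bisim P E L \<epsilon> \<delta> (\<Union>\<RR>)"
proof (rule approx_bisimI)
  show "refl (\<Union>\<RR>)"
    using \<open>\<RR> \<noteq> {}\<close> bisims unfolding approx_bisim_def refl_on_def by blast
  show "sym (\<Union>\<RR>)"
    using bisims unfolding approx_bisim_def sym_def by blast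
next
  fix s s' A
  assume "(s, s') \<in> \<Union>\<RR>"
  then obtain R where R: "R \<in> \<RR>" "(s, s') \<in> R" by blast
  show "L s = L s'" and "\<bar>ln (E s) - ln (E s')\<bar> \<le> \<delta>"
    using approx_bisimD[OF bisims[OF R(1)] R(2)] by auto
  have "Pset P s A \<le> Pset P s' (R `` A) + \<epsilon>"
    by (rule approx_bisimD[OF bisims[OF R(1)] R(2)])
  also have "Pset P s' (R `` A) \<le> Pset P s' (\<Union>\<RR> `` A)"
    using R(1) by (intro Pset_mono nonneg) blast
  finally show "Pset P s A \<le> Pset P s' (\<Union>\<RR> `` A) + \<epsilon>" by simp
qed

lemma approx_bisimilarity_eq_Union:
  "approx_bisimilarity P E L \<epsilon> \<delta> = \<Union>{R. approx_bisim P E L \<epsilon> \<delta> R}"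
  unfolding approx_bisimilarity_def approx_bisimilar_def by blast

lemma approx_bisim_approx_bisimilarity:
  assumes "\<And>s t. 0 \<le> P s t" and "0 \<le> \<epsilon>" and "0 \<le> \<delta>"
  shows "approx_bisim P E L \<epsilon> \<delta> (approx_bisimilarity P E L \<epsilon> \<delta>)"
  unfolding approx_bisimilarity_eq_Union
  using approx_bisim_Id[OF assms(2,3)] by (intro approx_bisim_Union assms(1)) auto

lemma approx_bisim_subset_approx_bisimilarity:
  "approx_bisim P E L \<epsilon> \<delta> R \<Longrightarrow> R \<subseteq> approx_bisimilarity P E L \<epsilon> \<delta>"
  unfolding approx_bisimilarity_eq_Union by blast

lemma Pset_relcomp_le:
  assumes "\<And>s t. 0 \<le> P s t"
    and R\<^sub>1: "approx_bisim P E L \<epsilon>\<^sub>1 \<delta>\<^sub>1 R\<^sub>1" "(s, t) \<in> R\<^sub>1"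
    and R\<^sub>2: "approx_bisim P E L \<epsilon>\<^sub>2 \<delta>\<^sub>2 R\<^sub>2" "(t, u) \<in> R\<^sub>2"
    and "R\<^sub>1 O R\<^sub>2 \<subseteq> R"
  shows "Pset P s A \<le> Pset P u (R `` A) + (\<epsilon>\<^sub>1 + \<epsilon>\<^sub>2)"
proof -
  have "R\<^sub>2 `` R\<^sub>1 `` A \<subseteq> R `` A"
    using \<open>R\<^sub>1 O R\<^sub>2 \<subseteq> R\<close> by (auto simp flip: relcomp_Image)
  have "Pset P s A \<le> Pset P t (R\<^sub>1 `` A) + \<epsilon>\<^sub>1"
    by (rule approx_bisimD[OF R\<^sub>1])
  also have "Pset P t (R\<^sub>1 `` A) \<le> Pset P u (R\<^sub>2 `` R\<^sub>1 `` A) + \<epsilon>\<^sub>2"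
    by (rule approx_bisimD[OF R\<^sub>2])
  also have "Pset P u (R\<^sub>2 `` R\<^sub>1 `` A) \<le> Pset P u (R `` A)"
    by (rule Pset_mono[OF assms(1) \<open>R\<^sub>2 `` R\<^sub>1 `` A \<subseteq> R `` A\<close>])
  finally show ?thesis by simp
qed

lemma approx_bisim_relcomp_sym:
  assumes "\<And>s t. 0 \<le> P s t"
    and R\<^sub>1: "approx_bisim P E L \<epsilon>\<^sub>1 \<delta>\<^sub>1 R\<^sub>1" and R\<^sub>2: "approx_bisim P E L \<epsilon>\<^sub>2 \<delta>\<^sub>2 R\<^sub>2"
  shows "approx_bisim P E L (\<epsilon>\<^sub>1 + \<epsilon>\<^sub>2) (\<delta>\<^sub>1 + \<delta>\<^sub>2) (R\<^sub>1 O R\<^sub>2 \<union> R\<^sub>2 O R\<^sub>1)"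
    (is "approx_bisim _ _ _ _ _ ?R")
proof -
  have "refl R\<^sub>1" "refl R\<^sub>2" "sym R\<^sub>1" "sym R\<^sub>2"
    using R\<^sub>1 R\<^sub>2 unfolding approx_bisim_def by auto
  then have "refl ?R" and "sym ?R"
    unfolding refl_on_def sym_def by blast+
  moreover have "L s = L u \<and> \<bar>ln (E s) - ln (E u)\<bar> \<le> \<delta>\<^sub>1 + \<delta>\<^sub>2 \<and>
      Pset P s A \<le> Pset P u (?R `` A) + (\<epsilon>\<^sub>1 + \<epsilon>\<^sub>2)"
    if "(s, u) \<in> ?R" for s u A
  proof -
    from that consider t where "(s, t) \<in> R\<^sub>1" "(t, u) \<in> R\<^sub>2"
      | t where "(s, t) \<in> R\<^sub>2" "(t, u) \<in> R\<^sub>1"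
      by blast
    then show ?thesis
    proof cases
      case (1 t)
      then show ?thesis
        using approx_bisimD[OF R\<^sub>1 1(1)] approx_bisimD[OF R\<^sub>2 1(2)]
          Pset_relcomp_le[OF assms(1) R\<^sub>1 1(1) R\<^sub>2 1(2), of ?R A]
        by auto
    next
      case (2 t)
      then show ?thesis
        using approx_bisimD[OF R\<^sub>2 2(1)] approx_bisimD[OF R\<^sub>1 2(2)]
          Pset_relcomp_le[OF assms(1) R\<^sub>2 2(1) R\<^sub>1 2(2), of ?R A]
        by (auto simp: add.commute)
    qed
  qed
  ultimately show ?thesis
    by (intro approx_bisimI) blast+
qed

lemma approx_bisimilar_trans:
  assumes "\<And>s t. 0 \<le> P s t"
    and "approx_bisimilar P E L \<epsilon>\<^sub>1 \<delta>\<^sub>1 s s'" and "approx_bisimilar P E L \<epsilon>\<^sub>2 \<delta>\<^sub>2 s' s''"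
  shows "approx_bisimilar P E L (\<epsilon>\<^sub>1 + \<epsilon>\<^sub>2) (\<delta>\<^sub>1 + \<delta>\<^sub>2) s s''"
proof -
  obtain R\<^sub>1 R\<^sub>2 where R\<^sub>1: "approx_bisim P E L \<epsilon>\<^sub>1 \<delta>\<^sub>1 R\<^sub>1" "(s, s') \<in> R\<^sub>1"
    and R\<^sub>2: "approx_bisim P E L \<epsilon>\<^sub>2 \<delta>\<^sub>2 R\<^sub>2" "(s', s'') \<in> R\<^sub>2"
    using assms(2,3) unfolding approx_bisimilar_def by blast
  have "approx_bisim P E L (\<epsilon>\<^sub>1 + \<epsilon>\<^sub>2) (\<delta>\<^sub>1 + \<delta>\<^sub>2) (R\<^sub>1 O R\<^sub>2 \<union> R\<^sub>2 O R\<^sub>1)"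
    by (rule approx_bisim_relcomp_sym[OF assms(1) R\<^sub>1(1) R\<^sub>2(1)])
  moreover have "(s, s'') \<in> R\<^sub>1 O R\<^sub>2 \<union> R\<^sub>2 O R\<^sub>1"
    using R\<^sub>1(2) R\<^sub>2(2) by blast
  ultimately show ?thesis
    unfolding approx_bisimilar_def by blast
qed

lemma Pset_Union_classes:
  assumes "equiv UNIV R" and "K \<subseteq> UNIV // R"
  shows "Pset P s (\<Union>K) = (\<Sum>C\<in>K. Pset P s (C::'s::finite set))"
proof -
  have "\<forall>X\<in>K. \<forall>Y\<in>K. X \<noteq> Y \<longrightarrow> X \<inter> Y = {}"
    using assms quotient_disj by blast
  then show ?thesis
    unfolding Pset_def by (simp add: sum.Union_disjoint)
qed

lemma Pset_Image_eq_if_classes_eq: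
  assumes "equiv UNIV R" and "\<forall>C \<in> UNIV // R. Pset P s C = Pset P t C"
  shows "Pset P s (R `` A) = Pset P t (R `` (A::'s::finite set))"
proof -
  have classes: "(\<lambda>a. R `` {a}) ` A \<subseteq> UNIV // R"
    by (auto intro: quotientI)
  have "R `` A = \<Union>((\<lambda>a. R `` {a}) ` A)"
    by (rule Image_eq_UN)
  then show ?thesis
    using assms classes by (simp add: Pset_Union_classes[OF assms(1) classes] subset_iff)
qed

lemma strong_bisim_imp_approx_bisim:
  assumes "\<And>s t. 0 \<le> P s t" and R: "strong_bisim P E L R"
  shows "approx_bisim P E L 0 0 R"
proof -
  have equiv: "equiv UNIV R"
    using R unfolding strong_bisim_def by blast
  have "Pset P s A \<le> Pset P s' (R `` A)" if "(s, s') \<in> R" for s s' A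
  proof -
    have "A \<subseteq> R `` A"
      using equiv unfolding equiv_def refl_on_def by blast
    then have "Pset P s A \<le> Pset P s (R `` A)"
      by (rule Pset_mono[OF assms(1)])
    also have "\<dots> = Pset P s' (R `` A)"
      using R \<open>(s, s') \<in> R\<close> unfolding strong_bisim_def
      by (intro Pset_Image_eq_if_classes_eq[OF equiv]) blast
    finally show ?thesis .
  qed
  then show ?thesis
    using R unfolding approx_bisim_def strong_bisim_def equiv_def by auto
qed

lemma Pset_eq_if_closed:
  assumes "\<And>s t. 0 \<le> P s t" and R: "approx_bisim P E L 0 0 R"
    and "(s, s') \<in> R" and closed: "R `` C \<subseteq> C"
  shows "Pset P s C = Pset P s' C"
proof -
  have le: "Pset P a C \<le> Pset P b C" if "(a, b) \<in> R" for a b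
  proof -
    have "Pset P a C \<le> Pset P b (R `` C)"
      using approx_bisimD(3)[OF R that] by simp
    also have "\<dots> \<le> Pset P b C"
      by (rule Pset_mono[OF assms(1) closed])
    finally show ?thesis .
  qed
  have "(s', s) \<in> R"
    using R \<open>(s, s') \<in> R\<close> unfolding approx_bisim_def sym_def by blast
  then show ?thesis
    using le \<open>(s, s') \<in> R\<close> by (simp add: order_antisym)
qed

lemma Image_rtrancl_class_closed: "R `` (R\<^sup>* `` {w}) \<subseteq> R\<^sup>* `` {w}"
  by (auto intro: rtrancl_into_rtrancl)

lemma approx_bisim_zero_imp_strong_bisim:
  assumes "\<And>s t. 0 \<le> P s t" and E_pos: "\<And>s. 0 < E s"
    and R: "approx_bisim P E L 0 0 R"
  shows "strong_bisim P E L (R\<^sup>*)"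
proof -
  have "refl R" and "sym R"
    using R unfolding approx_bisim_def by auto
  then have equiv: "equiv UNIV (R\<^sup>*)"
    unfolding equiv_def by (simp add: refl_rtrancl sym_rtrancl trans_rtrancl)
  have R_step: "L s = L s' \<and> E s = E s' \<and> (\<forall>C \<in> UNIV // R\<^sup>*. Pset P s C = Pset P s' C)"
    if "(s, s') \<in> R" for s s'
  proof (intro conjI ballI)
    show "L s = L s'"
      by (rule approx_bisimD(1)[OF R that])
    show "E s = E s'"
      using approx_bisimD(2)[OF R that] E_pos by simp
  next
    fix C
    assume "C \<in> UNIV // R\<^sup>*"
    then obtain w where "C = R\<^sup>* `` {w}"
      by (auto elim: quotientE)
    then show "Pset P s C = Pset P s' C"
      using Pset_eq_if_closed[OF assms(1) R that Image_rtrancl_class_closed] by simp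
  qed
  have "L s = L s' \<and> E s = E s' \<and> (\<forall>C \<in> UNIV // R\<^sup>*. Pset P s C = Pset P s' C)"
    if "(s, s') \<in> R\<^sup>*" for s s'
    using that
  proof (induction rule: rtrancl_induct)
    case (step t t')
    then show ?case
      using R_step[of t t'] by simp
  qed simp
  then show ?thesis
    using equiv unfolding strong_bisim_def by blast
qed

lemma strong_bisimilar_iff_approx_bisimilar_zero:
  assumes "\<And>s t. 0 \<le> P s t" and "\<And>s. 0 < E s"
  shows "strong_bisimilar P E L s s' \<longleftrightarrow> approx_bisimilar P E L 0 0 s s'"
proof
  assume "strong_bisimilar P E L s s'"
  then obtain R where "strong_bisim P E L R" "(s, s') \<in> R"
    unfolding strong_bisimilar_def by blast
  then show "approx_bisimilar P E L 0 0 s s'"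
    unfolding approx_bisimilar_def
    using strong_bisim_imp_approx_bisim[of P, OF assms(1)] by blast
next
  assume "approx_bisimilar P E L 0 0 s s'"
  then obtain R where "approx_bisim P E L 0 0 R" "(s, s') \<in> R"
    unfolding approx_bisimilar_def by blast
  then show "strong_bisimilar P E L s s'"
    unfolding strong_bisimilar_def
    using approx_bisim_zero_imp_strong_bisim[of P E, OF assms] by blast
qed

theorem theorem2:
  fixes P :: "'s::finite \<Rightarrow> 's \<Rightarrow> real" and E :: "'s \<Rightarrow> real" and s_init :: 's
    and L :: "'s \<Rightarrow> 'ap set"
    and \<epsilon> \<delta> \<epsilon>1 \<delta>1 \<epsilon>2 \<delta>2 :: real and s s' s'' :: 's
  assumes "ctmc P E s_init L"
    and "0 \<le> \<epsilon>" "0 \<le> \<delta>" "0 \<le> \<epsilon>1" "0 \<le> \<delta>1" "0 \<le> \<epsilon>2" "0 \<le> \<delta>2"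
  shows "(approx_bisim P E L \<epsilon> \<delta> (approx_bisimilarity P E L \<epsilon> \<delta>) \<and>
         (\<forall>R. approx_bisim P E L \<epsilon> \<delta> R \<longrightarrow> R \<subseteq> approx_bisimilarity P E L \<epsilon> \<delta>)) \<and>
         (approx_bisimilar P E L \<epsilon>1 \<delta>1 s s' \<and> approx_bisimilar P E L \<epsilon>2 \<delta>2 s' s''
           \<longrightarrow> approx_bisimilar P E L (\<epsilon>1 + \<epsilon>2) (\<delta>1 + \<delta>2) s s'') \<and>
         (strong_bisimilar P E L s s' \<longleftrightarrow> approx_bisimilar P E L 0 0 s s')"
proof -
  have nonneg: "\<And>s t. 0 \<le> P s t" and E_pos: "\<And>s. 0 < E s"
    using assms(1) unfolding ctmc_def by auto
  show ?thesis
  proof (intro conjI allI impI)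
    show "approx_bisim P E L \<epsilon> \<delta> (approx_bisimilarity P E L \<epsilon> \<delta>)"
      by (rule approx_bisim_approx_bisimilarity[OF nonneg assms(2,3)])
    show "R \<subseteq> approx_bisimilarity P E L \<epsilon> \<delta>" if "approx_bisim P E L \<epsilon> \<delta> R" for R
      using that by (rule approx_bisim_subset_approx_bisimilarity)
    show "approx_bisimilar P E L (\<epsilon>1 + \<epsilon>2) (\<delta>1 + \<delta>2) s s''"
      if "approx_bisimilar P E L \<epsilon>1 \<delta>1 s s' \<and> approx_bisimilar P E L \<epsilon>2 \<delta>2 s' s''"
      using that approx_bisimilar_trans[of P, OF nonneg] by blast
    show "strong_bisimilar P E L s s' \<longleftrightarrow> approx_bisimilar P E L 0 0 s s'"
      by (rule strong_bisimilar_iff_approx_bisimilar_zero[OF nonneg E_pos])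
  qed
qed

end
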